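(* Let $S\in\mathbb{S}^n$ and let $(U,V)\in\mathbb{R}^{n\times n}$ be an invertible matrix with $U\in\mathbb{R}^{n\times d}$, $V\in\mathbb{R}^{n\times(n-d)}$, such that $S=VV^T$ and $\mathbb{S}^n_+\cap S^{\perp}=\{UWU^T:W\in\mathbb{S}^d_+\}$. Let $$X=(U,V)\begin{pmatrix}W&Z\\Z^T&R\end{pmatrix}(U,V)^T$$ with $W\in\mathbb{S}^d_+$, $R\in\mathbb{S}^{n-d}$, $Z\in\mathbb{R}^{d\times(n-d)}$. Then there exist $P\in\mathbb{S}^n_+$ and $\alpha\in\mathbb{R}$ with $X=P+\alpha S$ (i.e. $X\in\mathbb{S}^n_++\operatorname{lin}S$) if and only if $\operatorname{null}W\subseteq\operatorname{null}Z^T$.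
   Context: $\mathbb{S}^n$ denotes real symmetric $n\times n$ matrices with trace inner product, $\mathbb{S}^n_+$ the positive semidefinite cone, $S^{\perp}=\{X\in\mathbb{S}^n:\operatorname{trace}(SX)=0\}$, $\operatorname{lin}S=\{\alpha S:\alpha\in\mathbb{R}\}$. *)

theory Defs
  imports "Jordan_Normal_Form.Matrix_Kernel"
begin

definition mtrace :: "real mat \<Rightarrow> real" where
  "mtrace A = (\<Sum>i<dim_row A. A $$ (i,i))"

definition psd :: "nat \<Rightarrow> real mat \<Rightarrow> bool" where
  "psd n A \<longleftrightarrow> A \<in> carrier_mat n n \<and> transpose_mat A = A \<and>
     (\<forall>v\<in>carrier_vec n. 0 \<le> v \<bullet> (A *\<^sub>v v))"

definition cat_cols :: "real mat \<Rightarrow> real mat \<Rightarrow> real mat" where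
  "cat_cols U V = mat (dim_row U) (dim_col U + dim_col V)
     (\<lambda>(i,j). if j < dim_col U then U $$ (i,j) else V $$ (i, j - dim_col U))"

end

theory Submission
  imports Defs
begin

(* With M = (U,V) and E = diag(0, I) we have S = M E M^T, so X + alpha S is congruent via the
   invertible M to the block matrix B(alpha) = [[W, Z], [Z^T, R + alpha I]], and congruence
   preserves semidefiniteness.  If some B(alpha) is semidefinite and W x = 0, testing it on the
   vectors (t x, Z^T x) gives 2 t |Z^T x|^2 + c >= 0 for all t, hence Z^T x = 0.  Conversely, if
   null W is contained in null Z^T then Z = W C for some C (the range of the semidefinite W is the
   orthogonal complement of its kernel; proved by Gaussian elimination), and
   B(alpha) = L diag(W, R - C^T W C + alpha I) L^T with L unit lower triangular; the second
   diagonal block is semidefinite once alpha dominates the entries of R - C^T W C. *)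

lemma nonneg_affine_imp_slope_zero:
  fixes a b :: real
  assumes "\<And>t. 0 \<le> t * a + b"
  shows "a = 0"
proof (rule ccontr)
  assume "a \<noteq> 0"
  have "0 \<le> (- (\<bar>b\<bar> + 1) / a) * a + b" by (rule assms)
  also have "\<dots> = b - (\<bar>b\<bar> + 1)" using \<open>a \<noteq> 0\<close> by simp
  finally show False by linarith
qed

definition quad_form :: "'a set \<Rightarrow> ('a \<Rightarrow> 'a \<Rightarrow> real) \<Rightarrow> ('a \<Rightarrow> real) \<Rightarrow> real" where
  "quad_form I W x = (\<Sum>i\<in>I. \<Sum>j\<in>I. x i * W i j * x j)"

definition psd_form :: "'a set \<Rightarrow> ('a \<Rightarrow> 'a \<Rightarrow> real) \<Rightarrow> bool" where
  "psd_form I W \<longleftrightarrow> (\<forall>i\<in>I. \<forall>j\<in>I. W i j = W j i) \<and> (\<forall>x. 0 \<le> quad_form I W x)"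

lemma sum_fun_upd_notin:
  "p \<notin> I \<Longrightarrow> (\<Sum>j\<in>I. f j * (x(p := v)) j) = (\<Sum>j\<in>I. f j * x j)"
  by (intro sum.cong) auto

lemma sum_insert_fun_upd:
  "finite I \<Longrightarrow> p \<notin> I
    \<Longrightarrow> (\<Sum>j\<in>insert p I. f j * (x(p := v)) j) = f p * v + (\<Sum>j\<in>I. f j * x j)"
  using sum_fun_upd_notin[of p I f x v] by simp

lemma quad_form_fun_upd_notin: "p \<notin> I \<Longrightarrow> quad_form I W (x(p := v)) = quad_form I W x"
  unfolding quad_form_def by (intro sum.cong) auto

lemma sum_col_eq_sum_row:
  fixes W :: "'a \<Rightarrow> 'a \<Rightarrow> real"
  assumes "\<forall>i\<in>I. W i p = W p i"
  shows "(\<Sum>i\<in>I. x i * W i p) = (\<Sum>i\<in>I. W p i * x i)"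
proof (intro sum.cong refl)
  fix i assume "i \<in> I"
  then show "x i * W i p = W p i * x i" using assms by (simp add: mult.commute)
qed

lemma quad_form_insert:
  assumes "finite I" "p \<notin> I" and sym: "\<forall>i\<in>insert p I. \<forall>j\<in>insert p I. W i j = W j i"
  shows "quad_form (insert p I) W x
     = x p * W p p * x p + 2 * x p * (\<Sum>j\<in>I. W p j * x j) + quad_form I W x"
proof -
  have "(\<Sum>i\<in>I. x i * W i p * x p) = x p * (\<Sum>j\<in>I. W p j * x j)"
  proof -
    have "(\<Sum>i\<in>I. x i * W i p * x p) = (\<Sum>i\<in>I. x i * W i p) * x p"
      by (simp add: sum_distrib_right)
    also have "(\<Sum>i\<in>I. x i * W i p) = (\<Sum>j\<in>I. W p j * x j)"
      using sym by (intro sum_col_eq_sum_row) blast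
    finally show ?thesis by simp
  qed
  moreover have "(\<Sum>j\<in>I. x p * W p j * x j) = x p * (\<Sum>j\<in>I. W p j * x j)"
    unfolding sum_distrib_left by (intro sum.cong) auto
  moreover have "quad_form (insert p I) W x = x p * W p p * x p + (\<Sum>j\<in>I. x p * W p j * x j)
      + ((\<Sum>i\<in>I. x i * W i p * x p) + quad_form I W x)"
    using assms(1,2) unfolding quad_form_def by (simp add: sum.distrib)
  ultimately show ?thesis by simp
qed

lemma psd_form_zero_diag_imp_zero_row:
  assumes "finite I" "p \<notin> I" and psd: "psd_form (insert p I) W" and "W p p = 0"
  shows "\<forall>j\<in>I. W p j = 0"
proof -
  have sym: "\<forall>i\<in>insert p I. \<forall>j\<in>insert p I. W i j = W j i"
    using psd unfolding psd_form_def by blast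
  define r where "r = W p"
  have "(\<Sum>j\<in>I. W p j * r j) = 0"
  proof (rule nonneg_affine_imp_slope_zero)
    fix t
    have "0 \<le> quad_form (insert p I) W (r(p := t / 2))"
      using psd unfolding psd_form_def by blast
    also have "\<dots> = t * (\<Sum>j\<in>I. W p j * r j) + quad_form I W r"
      unfolding quad_form_insert[OF assms(1,2) sym] quad_form_fun_upd_notin[OF assms(2)]
        sum_fun_upd_notin[OF assms(2)]
      using \<open>W p p = 0\<close> by simp
    finally show "0 \<le> t * (\<Sum>j\<in>I. W p j * r j) + quad_form I W r" .
  qed
  then show ?thesis
    using sum_nonneg_eq_0_iff[OF assms(1), of "\<lambda>j. W p j * W p j"] unfolding r_def by simp
qed

definition schur_compl :: "('a \<Rightarrow> 'a \<Rightarrow> real) \<Rightarrow> 'a \<Rightarrow> 'a \<Rightarrow> 'a \<Rightarrow> real" where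
  "schur_compl W p i j = W i j - W i p * W p j / W p p"

lemma schur_compl_row_sum:
  "(\<Sum>j\<in>I. schur_compl W p i j * x j)
     = (\<Sum>j\<in>I. W i j * x j) - W i p * (\<Sum>j\<in>I. W p j * x j) / W p p"
  unfolding schur_compl_def
  by (simp add: algebra_simps sum_subtractf sum_distrib_left sum_divide_distrib)

lemma quad_form_schur_compl:
  assumes "finite I" "p \<notin> I" and sym: "\<forall>i\<in>insert p I. \<forall>j\<in>insert p I. W i j = W j i"
  shows "quad_form I (schur_compl W p) x
     = quad_form (insert p I) W (x(p := - (\<Sum>j\<in>I. W p j * x j) / W p p))"
proof -
  define s where "s = (\<Sum>j\<in>I. W p j * x j)"
  have "(\<Sum>i\<in>I. x i * W i p) = s"
    unfolding s_def using sym by (intro sum_col_eq_sum_row) blast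
  have "(\<Sum>i\<in>I. \<Sum>j\<in>I. (x i * W i p) * (W p j * x j)) = s * s"
    unfolding sum_product[symmetric] \<open>(\<Sum>i\<in>I. x i * W i p) = s\<close> s_def ..
  moreover have "quad_form I (schur_compl W p) x
      = (\<Sum>i\<in>I. \<Sum>j\<in>I. x i * W i j * x j - (x i * W i p) * (W p j * x j) / W p p)"
    unfolding quad_form_def schur_compl_def by (intro sum.cong refl) (simp add: algebra_simps)
  ultimately have "quad_form I (schur_compl W p) x = quad_form I W x - s * s / W p p"
    by (simp add: quad_form_def sum_subtractf flip: sum_divide_distrib)
  also have "\<dots> = quad_form (insert p I) W (x(p := - s / W p p))"
    unfolding quad_form_insert[OF assms] quad_form_fun_upd_notin[OF assms(2)]
      sum_fun_upd_notin[OF assms(2)] s_def[symmetric]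
    by (cases "W p p = 0") (simp_all add: field_simps)
  finally show ?thesis unfolding s_def .
qed

lemma psd_form_schur_compl:
  assumes "finite I" "p \<notin> I" and psd: "psd_form (insert p I) W"
  shows "psd_form I (schur_compl W p)"
proof -
  have sym: "\<forall>i\<in>insert p I. \<forall>j\<in>insert p I. W i j = W j i"
    using psd unfolding psd_form_def by blast
  have "schur_compl W p i j = schur_compl W p j i" if "i \<in> I" "j \<in> I" for i j
  proof -
    have "W i j = W j i" "W i p = W p i" "W j p = W p j" using sym that by blast+
    then show ?thesis unfolding schur_compl_def by simp
  qed
  moreover have "0 \<le> quad_form I (schur_compl W p) x" for x
    unfolding quad_form_schur_compl[OF assms(1,2) sym] using psd unfolding psd_form_def by blast
  ultimately show ?thesis unfolding psd_form_def by blast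
qed

definition orthogonal_to_kernel :: "'a set \<Rightarrow> ('a \<Rightarrow> 'a \<Rightarrow> real) \<Rightarrow> ('a \<Rightarrow> real) \<Rightarrow> bool" where
  "orthogonal_to_kernel I W z \<longleftrightarrow>
     (\<forall>x. (\<forall>i\<in>I. (\<Sum>j\<in>I. W i j * x j) = 0) \<longrightarrow> (\<Sum>i\<in>I. z i * x i) = 0)"

lemma orthogonal_to_kernel_zero_pivot:
  assumes "finite I" "p \<notin> I" and psd: "psd_form (insert p I) W"
    and orth: "orthogonal_to_kernel (insert p I) W z" and "W p p = 0"
  shows "z p = 0"
proof -
  have "W p j = 0" if "j \<in> I" for j
    using psd_form_zero_diag_imp_zero_row[OF assms(1-3) \<open>W p p = 0\<close>] that by blast
  then have "W i p = 0" if "i \<in> insert p I" for i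
    using psd \<open>W p p = 0\<close> that unfolding psd_form_def by (cases "i = p") auto
  then have "\<forall>i\<in>insert p I. (\<Sum>j\<in>insert p I. W i j * ((\<lambda>_. 0)(p := 1)) j) = 0"
    unfolding sum_insert_fun_upd[OF assms(1,2)] by simp
  then have "(\<Sum>i\<in>insert p I. z i * ((\<lambda>_. 0)(p := 1)) i) = 0"
    using orth unfolding orthogonal_to_kernel_def by blast
  then show ?thesis unfolding sum_insert_fun_upd[OF assms(1,2)] by simp
qed

text \<open>A zero pivot \<open>W p p\<close> forces a zero row, and then the
  convention \<open>x / 0 = 0\<close> makes the Schur complement and all formulas below degenerate
  correctly; only the equation of row \<open>p\<close> needs a case split.\<close>

lemma orthogonal_to_kernel_schur_compl:
  assumes "finite I" "p \<notin> I" and psd: "psd_form (insert p I) W"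
    and orth: "orthogonal_to_kernel (insert p I) W z"
  shows "orthogonal_to_kernel I (schur_compl W p) (\<lambda>i. z i - W i p * z p / W p p)"
  unfolding orthogonal_to_kernel_def
proof (intro allI impI)
  fix x assume ker: "\<forall>i\<in>I. (\<Sum>j\<in>I. schur_compl W p i j * x j) = 0"
  define s where "s = (\<Sum>j\<in>I. W p j * x j)"
  note row = sum_insert_fun_upd[OF assms(1,2)]
  have "(\<Sum>j\<in>insert p I. W i j * (x(p := - s / W p p)) j) = 0" if "i \<in> insert p I" for i
  proof (cases "i = p")
    case True
    have "W p p = 0 \<Longrightarrow> s = 0"
      using psd_form_zero_diag_imp_zero_row[OF assms(1-3)] unfolding s_def by simp
    then show ?thesis unfolding True row s_def[symmetric] by (cases "W p p = 0") simp_all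
  next
    case False
    then show ?thesis using ker that unfolding row schur_compl_row_sum by (simp add: s_def)
  qed
  then have "(\<Sum>i\<in>insert p I. z i * (x(p := - s / W p p)) i) = 0"
    using orth unfolding orthogonal_to_kernel_def by blast
  then have "(\<Sum>i\<in>I. z i * x i) = z p * s / W p p"
    unfolding row by simp
  moreover have "(\<Sum>i\<in>I. x i * W i p) = s"
    unfolding s_def using psd unfolding psd_form_def by (intro sum_col_eq_sum_row) blast
  moreover have "(\<Sum>i\<in>I. (z i - W i p * z p / W p p) * x i)
      = (\<Sum>i\<in>I. z i * x i) - z p / W p p * (\<Sum>i\<in>I. x i * W i p)"
    unfolding left_diff_distrib sum_subtractf sum_distrib_left by (simp add: mult_ac)
  ultimately show "(\<Sum>i\<in>I. (z i - W i p * z p / W p p) * x i) = 0" by simp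
qed

lemma schur_compl_solution_extend:
  assumes "finite I" "p \<notin> I" and psd: "psd_form (insert p I) W"
    and orth: "orthogonal_to_kernel (insert p I) W z"
    and c: "\<forall>i\<in>I. (\<Sum>j\<in>I. schur_compl W p i j * c j) = z i - W i p * z p / W p p"
  defines "t \<equiv> \<Sum>j\<in>I. W p j * c j"
  shows "\<forall>i\<in>insert p I. (\<Sum>j\<in>insert p I. W i j * (c(p := (z p - t) / W p p)) j) = z i"
proof
  note row = sum_insert_fun_upd[OF assms(1,2)]
  fix i assume i: "i \<in> insert p I"
  show "(\<Sum>j\<in>insert p I. W i j * (c(p := (z p - t) / W p p)) j) = z i"
  proof (cases "i = p")
    case True
    have "W p p = 0 \<Longrightarrow> t = 0 \<and> z p = 0"
      using psd_form_zero_diag_imp_zero_row[OF assms(1-3)]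
        orthogonal_to_kernel_zero_pivot[OF assms(1-4)] unfolding t_def by simp
    then show ?thesis unfolding True row t_def[symmetric] by (cases "W p p = 0") simp_all
  next
    case False
    then have "(\<Sum>j\<in>I. W i j * c j) - W i p * t / W p p = z i - W i p * z p / W p p"
      using c i unfolding schur_compl_row_sum t_def by simp
    then show ?thesis unfolding row by (simp add: algebra_simps diff_divide_distrib)
  qed
qed

lemma psd_form_solvable:
  assumes "finite I" "psd_form I W" "orthogonal_to_kernel I W z"
  shows "\<exists>c. \<forall>i\<in>I. (\<Sum>j\<in>I. W i j * c j) = z i"
  using assms
proof (induction I arbitrary: W z rule: finite_induct)
  case empty
  then show ?case by simp
next
  case (insert p I)
  obtain c where "\<forall>i\<in>I. (\<Sum>j\<in>I. schur_compl W p i j * c j) = z i - W i p * z p / W p p"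
    using insert.IH psd_form_schur_compl[OF insert.hyps insert.prems(1)]
      orthogonal_to_kernel_schur_compl[OF insert.hyps insert.prems] by blast
  then show ?case using schur_compl_solution_extend[OF insert.hyps insert.prems] by blast
qed

lemma scalar_prod_mult_mat_vec_eq_quad_form:
  fixes A :: "real mat"
  assumes "A \<in> carrier_mat n n" "v \<in> carrier_vec n"
  shows "v \<bullet> (A *\<^sub>v v) = quad_form {..<n} (\<lambda>i j. A $$ (i, j)) (\<lambda>i. v $ i)"
  using assms unfolding quad_form_def
  by (auto simp: row_def scalar_prod_def sum_distrib_left mult.assoc atLeast0LessThan
      intro!: sum.cong)

lemma mult_mat_vec_index_sum:
  fixes A :: "real mat"
  assumes "A \<in> carrier_mat nr nc" "v \<in> carrier_vec nc" "i < nr"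
  shows "(A *\<^sub>v v) $ i = (\<Sum>j<nc. A $$ (i, j) * v $ j)"
  using assms by (auto simp: scalar_prod_def atLeast0LessThan intro!: sum.cong)

lemma psd_imp_psd_form:
  assumes "psd n A"
  shows "psd_form {..<n} (\<lambda>i j. A $$ (i, j))"
proof -
  have A: "A \<in> carrier_mat n n" and "transpose_mat A = A"
    and nonneg: "\<forall>v\<in>carrier_vec n. 0 \<le> v \<bullet> (A *\<^sub>v v)"
    using assms unfolding psd_def by auto
  then have "\<forall>i\<in>{..<n}. \<forall>j\<in>{..<n}. A $$ (i, j) = A $$ (j, i)"
    by (metis carrier_matD(1,2) index_transpose_mat(1) lessThan_iff)
  moreover have "0 \<le> quad_form {..<n} (\<lambda>i j. A $$ (i, j)) x" for x
  proof -
    have "quad_form {..<n} (\<lambda>i j. A $$ (i, j)) x = vec n x \<bullet> (A *\<^sub>v vec n x)"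
      unfolding scalar_prod_mult_mat_vec_eq_quad_form[OF A vec_carrier] quad_form_def
      by (intro sum.cong) auto
    then show ?thesis using nonneg by simp
  qed
  ultimately show ?thesis unfolding psd_form_def by blast
qed

lemma psd_solvable_of_orthogonal_kernel:
  assumes "psd n A" "z \<in> carrier_vec n" and orth: "\<forall>x\<in>mat_kernel A. z \<bullet> x = 0"
  shows "\<exists>c\<in>carrier_vec n. A *\<^sub>v c = z"
proof -
  have A: "A \<in> carrier_mat n n" using assms(1) unfolding psd_def by auto
  have "\<exists>c. \<forall>i\<in>{..<n}. (\<Sum>j\<in>{..<n}. A $$ (i, j) * c j) = z $ i"
  proof (rule psd_form_solvable[of "{..<n}" "\<lambda>i j. A $$ (i, j)" "\<lambda>i. z $ i"])
    show "psd_form {..<n} (\<lambda>i j. A $$ (i, j))" by (rule psd_imp_psd_form[OF assms(1)])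
    show "orthogonal_to_kernel {..<n} (\<lambda>i j. A $$ (i, j)) (\<lambda>i. z $ i)"
      unfolding orthogonal_to_kernel_def
    proof (intro allI impI)
      fix x assume x: "\<forall>i\<in>{..<n}. (\<Sum>j\<in>{..<n}. A $$ (i, j) * x j) = 0"
      have "(A *\<^sub>v vec n x) $ i = 0" if "i < n" for i
        unfolding mult_mat_vec_index_sum[OF A vec_carrier that] using x that by simp
      then have "A *\<^sub>v vec n x = 0\<^sub>v n"
        using A by (intro eq_vecI) auto
      then have "vec n x \<in> mat_kernel A" using A by (intro mat_kernelI) auto
      then have "z \<bullet> vec n x = 0" using orth by blast
      then show "(\<Sum>i\<in>{..<n}. z $ i * x i) = 0"
        using assms(2) by (simp add: scalar_prod_def atLeast0LessThan)
    qed
  qed (rule finite_lessThan)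
  then obtain c where c: "\<forall>i<n. (\<Sum>j<n. A $$ (i, j) * c j) = z $ i" by auto
  have "(A *\<^sub>v vec n c) $ i = z $ i" if "i < n" for i
    unfolding mult_mat_vec_index_sum[OF A vec_carrier that] using c that by simp
  then have "A *\<^sub>v vec n c = z"
    using A assms(2) by (intro eq_vecI) auto
  then show ?thesis using vec_carrier by blast
qed

lemma psd_factor_of_kernel_subset:
  fixes Z :: "real mat"
  assumes W: "psd d W" and Z: "Z \<in> carrier_mat d m"
    and ker: "mat_kernel W \<subseteq> mat_kernel (transpose_mat Z)"
  shows "\<exists>C\<in>carrier_mat d m. W * C = Z"
proof -
  have Wc: "W \<in> carrier_mat d d" using W unfolding psd_def by auto
  have "\<exists>c\<in>carrier_vec d. W *\<^sub>v c = col Z k" if "k < m" for k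
  proof (rule psd_solvable_of_orthogonal_kernel[OF W])
    show "col Z k \<in> carrier_vec d" using Z by auto
    show "\<forall>x\<in>mat_kernel W. col Z k \<bullet> x = 0"
    proof
      fix x assume "x \<in> mat_kernel W"
      then have "transpose_mat Z *\<^sub>v x = 0\<^sub>v m" using ker Z unfolding mat_kernel_def by auto
      then show "col Z k \<bullet> x = 0"
        using that Z by (metis carrier_matD(2) index_mult_mat_vec index_transpose_mat(2,3)
            index_zero_vec(1) row_transpose)
    qed
  qed
  then obtain c where c: "\<And>k. k < m \<Longrightarrow> c k \<in> carrier_vec d \<and> W *\<^sub>v c k = col Z k"
    by metis
  define C where "C = mat d m (\<lambda>(i, k). c k $ i)"
  have "W * C = Z"
  proof (rule eq_matI)
    fix i k assume "i < dim_row Z" "k < dim_col Z"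
    then have ik: "i < d" "k < m" using Z by auto
    have "col C k = c k" using c[OF ik(2)] ik(2) unfolding C_def by (intro eq_vecI) auto
    then have "(W * C) $$ (i, k) = (W *\<^sub>v c k) $ i"
      using Wc ik unfolding C_def by simp
    then show "(W * C) $$ (i, k) = Z $$ (i, k)" using c[OF ik(2)] ik Z by simp
  qed (use Wc Z in \<open>auto simp: C_def\<close>)
  then show ?thesis unfolding C_def by auto
qed

lemma quad_form_lower_bound:
  fixes G :: "'a \<Rightarrow> 'a \<Rightarrow> real"
  assumes "finite I"
  shows "- (\<Sum>k\<in>I. \<Sum>l\<in>I. \<bar>G k l\<bar>) * (\<Sum>l\<in>I. y l * y l) \<le> quad_form I G y"
proof -
  define S where "S = (\<Sum>l\<in>I. y l * y l)"
  have "- (\<bar>G k l\<bar> * S) \<le> y k * G k l * y l" if "k \<in> I" "l \<in> I" for k l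
  proof -
    have "y k * y k \<le> S" "y l * y l \<le> S"
      unfolding S_def using assms that by (auto intro!: member_le_sum)
    moreover have "2 * \<bar>y k\<bar> * \<bar>y l\<bar> \<le> \<bar>y k\<bar>\<^sup>2 + \<bar>y l\<bar>\<^sup>2" by (rule sum_squares_bound)
    ultimately have "\<bar>y k * y l\<bar> \<le> S" by (simp add: abs_mult power2_eq_square)
    then have "\<bar>G k l\<bar> * \<bar>y k * y l\<bar> \<le> \<bar>G k l\<bar> * S" by (simp add: mult_left_mono)
    moreover have "\<bar>y k * G k l * y l\<bar> = \<bar>G k l\<bar> * \<bar>y k * y l\<bar>" by (simp add: abs_mult)
    ultimately show ?thesis by (metis abs_le_D2 minus_le_iff order_trans)
  qed
  then have "(\<Sum>k\<in>I. \<Sum>l\<in>I. - (\<bar>G k l\<bar> * S)) \<le> quad_form I G y"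
    unfolding quad_form_def by (intro sum_mono) auto
  then show ?thesis
    unfolding S_def by (simp add: sum_negf sum_distrib_right)
qed

lemma scalar_prod_self_eq_0_iff:
  fixes v :: "real vec"
  shows "v \<bullet> v = 0 \<longleftrightarrow> v = 0\<^sub>v (dim_vec v)"
proof
  assume "v \<bullet> v = 0"
  then have "\<forall>i\<in>{0..<dim_vec v}. v $ i * v $ i = 0"
    unfolding scalar_prod_def by (subst sum_nonneg_eq_0_iff[symmetric]) auto
  then show "v = 0\<^sub>v (dim_vec v)" by (intro eq_vecI) auto
qed (metis carrier_vec_dim_vec scalar_prod_left_zero)

lemma psd_add_scalar_one_exists:
  fixes A :: "real mat"
  assumes A: "A \<in> carrier_mat n n" and "transpose_mat A = A"
  shows "\<exists>\<alpha>. psd n (A + \<alpha> \<cdot>\<^sub>m 1\<^sub>m n)"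
proof
  define K where "K = (\<Sum>k<n. \<Sum>l<n. \<bar>A $$ (k, l)\<bar>)"
  have "0 \<le> v \<bullet> ((A + K \<cdot>\<^sub>m 1\<^sub>m n) *\<^sub>v v)" if v: "v \<in> carrier_vec n" for v
  proof -
    have "(K \<cdot>\<^sub>m 1\<^sub>m n) *\<^sub>v v = K \<cdot>\<^sub>v v"
      using v by (intro eq_vecI) auto
    then have "v \<bullet> ((A + K \<cdot>\<^sub>m 1\<^sub>m n) *\<^sub>v v) = v \<bullet> (A *\<^sub>v v) + K * (v \<bullet> v)"
      using A v by (simp add: add_mult_distrib_mat_vec scalar_prod_add_distrib[of _ n])
    also have "v \<bullet> v = (\<Sum>l<n. v $ l * v $ l)"
      using v by (simp add: scalar_prod_def atLeast0LessThan)
    finally show ?thesis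
      using quad_form_lower_bound[of "{..<n}" "\<lambda>k l. A $$ (k, l)" "\<lambda>l. v $ l"]
      unfolding scalar_prod_mult_mat_vec_eq_quad_form[OF A v] K_def by simp
  qed
  moreover have "transpose_mat (A + K \<cdot>\<^sub>m 1\<^sub>m n) = A + K \<cdot>\<^sub>m 1\<^sub>m n"
    using A assms(2) by (intro eq_matI) (auto, metis carrier_matD(1,2) index_transpose_mat(1))
  ultimately show "psd n (A + K \<cdot>\<^sub>m 1\<^sub>m n)" unfolding psd_def using A by simp
qed

lemma scalar_prod_four_block_mult_append:
  fixes W Z R :: "real mat"
  assumes W: "W \<in> carrier_mat d d" and Z: "Z \<in> carrier_mat d m" and R: "R \<in> carrier_mat m m"
    and x: "x \<in> carrier_vec d" and y: "y \<in> carrier_vec m"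
  shows "(x @\<^sub>v y) \<bullet> (four_block_mat W Z (transpose_mat Z) R *\<^sub>v (x @\<^sub>v y))
    = x \<bullet> (W *\<^sub>v x) + 2 * (x \<bullet> (Z *\<^sub>v y)) + y \<bullet> (R *\<^sub>v y)"
proof -
  have Zt: "transpose_mat Z \<in> carrier_mat m d" using Z by simp
  have "y \<bullet> (transpose_mat Z *\<^sub>v x) = x \<bullet> (Z *\<^sub>v y)"
    using comm_scalar_prod[of y m "transpose_mat Z *\<^sub>v x"] transpose_vec_mult_scalar[OF Z y x] Zt x y
    by simp
  then show ?thesis
    unfolding four_block_mat_mult_vec[OF W Z Zt R x y]
    using W Z Zt R x y
    by (simp add: scalar_prod_append[of _ d _ m] scalar_prod_add_distrib[of _ d]
        scalar_prod_add_distrib[of _ m])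
qed

lemma kernel_subset_of_psd_four_block:
  fixes W Z R :: "real mat"
  assumes W: "W \<in> carrier_mat d d" and Z: "Z \<in> carrier_mat d m" and R: "R \<in> carrier_mat m m"
    and psd: "psd (d + m) (four_block_mat W Z (transpose_mat Z) R)"
  shows "mat_kernel W \<subseteq> mat_kernel (transpose_mat Z)"
proof
  fix x assume "x \<in> mat_kernel W"
  then have x: "x \<in> carrier_vec d" and Wx: "W *\<^sub>v x = 0\<^sub>v d"
    using W unfolding mat_kernel_def by auto
  define y where "y = transpose_mat Z *\<^sub>v x"
  have y: "y \<in> carrier_vec m" using Z x unfolding y_def by simp
  have "x \<bullet> (Z *\<^sub>v y) = y \<bullet> y"
    using transpose_vec_mult_scalar[OF Z y x] unfolding y_def by simp
  have "y \<bullet> y = 0"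
  proof (rule nonneg_affine_imp_slope_zero)
    fix t
    have tx: "(t / 2) \<cdot>\<^sub>v x \<in> carrier_vec d" using x by simp
    have "0 \<le> ((t / 2) \<cdot>\<^sub>v x @\<^sub>v y) \<bullet> (four_block_mat W Z (transpose_mat Z) R *\<^sub>v ((t / 2) \<cdot>\<^sub>v x @\<^sub>v y))"
      using psd x y unfolding psd_def by auto
    also have "\<dots> = t * (y \<bullet> y) + y \<bullet> (R *\<^sub>v y)"
      unfolding scalar_prod_four_block_mult_append[OF W Z R tx y]
      using W Z x y Wx \<open>x \<bullet> (Z *\<^sub>v y) = y \<bullet> y\<close> by (simp add: mult_mat_vec)
    finally show "0 \<le> t * (y \<bullet> y) + y \<bullet> (R *\<^sub>v y)" .
  qed
  then have "transpose_mat Z *\<^sub>v x = 0\<^sub>v m"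
    using Z y unfolding y_def scalar_prod_self_eq_0_iff by simp
  then show "x \<in> mat_kernel (transpose_mat Z)" using Z x by (intro mat_kernelI) auto
qed

lemma psd_four_block_diag:
  fixes A B :: "real mat"
  assumes A: "psd d A" and B: "psd m B"
  shows "psd (d + m) (four_block_mat A (0\<^sub>m d m) (0\<^sub>m m d) B)"
proof -
  have Ac: "A \<in> carrier_mat d d" and Bc: "B \<in> carrier_mat m m"
    using A B unfolding psd_def by auto
  have "0 \<le> v \<bullet> (four_block_mat A (0\<^sub>m d m) (0\<^sub>m m d) B *\<^sub>v v)" if v: "v \<in> carrier_vec (d + m)" for v
  proof -
    obtain x y where "x \<in> carrier_vec d" "y \<in> carrier_vec m" "v = x @\<^sub>v y"
      using vec_first_last_append[OF v] vec_first_carrier vec_last_carrier by metis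
    moreover have "0\<^sub>m d m *\<^sub>v y = 0\<^sub>v d" using \<open>y \<in> carrier_vec m\<close> by (intro eq_vecI) auto
    ultimately show ?thesis
      using scalar_prod_four_block_mult_append[OF Ac zero_carrier_mat Bc, of x y] A B
      unfolding psd_def by simp
  qed
  then show ?thesis
    using A B Ac Bc transpose_four_block_mat[OF Ac zero_carrier_mat zero_carrier_mat Bc]
    unfolding psd_def by simp
qed

lemma psd_congruence:
  fixes A M :: "real mat"
  assumes A: "psd n A" and M: "M \<in> carrier_mat k n"
  shows "psd k (M * A * transpose_mat M)"
proof -
  have Ac: "A \<in> carrier_mat n n" and sym: "transpose_mat A = A"
    and nonneg: "\<forall>v\<in>carrier_vec n. 0 \<le> v \<bullet> (A *\<^sub>v v)"
    using A unfolding psd_def by auto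
  have Mt: "transpose_mat M \<in> carrier_mat n k" using M by simp
  have "v \<bullet> (M * A * transpose_mat M *\<^sub>v v) = (transpose_mat M *\<^sub>v v) \<bullet> (A *\<^sub>v (transpose_mat M *\<^sub>v v))"
    if v: "v \<in> carrier_vec k" for v
  proof -
    have "M * A * transpose_mat M *\<^sub>v v = (M * A) *\<^sub>v (transpose_mat M *\<^sub>v v)"
      using M Ac Mt v by (intro assoc_mult_mat_vec[of _ k n _ k]) auto
    also have "\<dots> = M *\<^sub>v (A *\<^sub>v (transpose_mat M *\<^sub>v v))"
      using M Ac Mt v by (intro assoc_mult_mat_vec[of _ k n _ n]) auto
    finally have "M * A * transpose_mat M *\<^sub>v v = M *\<^sub>v (A *\<^sub>v (transpose_mat M *\<^sub>v v))" .
    then show ?thesis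
      using transpose_vec_mult_scalar[OF M _ v, of "A *\<^sub>v (transpose_mat M *\<^sub>v v)"] Ac Mt v
      by simp
  qed
  moreover have "transpose_mat (M * A * transpose_mat M) = M * A * transpose_mat M"
  proof -
    have "transpose_mat (M * A * transpose_mat M) = M * transpose_mat (M * A)"
      using transpose_mult[of "M * A" k n "transpose_mat M" k] M Ac Mt by simp
    also have "\<dots> = M * (A * transpose_mat M)"
      using transpose_mult[of M k n A n] M Ac sym by simp
    finally show ?thesis using M Ac Mt by simp
  qed
  ultimately show ?thesis
    using M Ac Mt nonneg unfolding psd_def by simp
qed

lemma psd_congruence_iff:
  fixes A M :: "real mat"
  assumes M: "M \<in> carrier_mat n n" and inv: "invertible_mat M" and A: "A \<in> carrier_mat n n"
  shows "psd n (M * A * transpose_mat M) \<longleftrightarrow> psd n A"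
proof
  obtain N where MN: "M * N = 1\<^sub>m n" and NM: "N * M = 1\<^sub>m (dim_row N)"
    using inv M unfolding invertible_mat_def inverts_mat_def by auto
  then have N: "N \<in> carrier_mat n n"
    using M by (metis carrier_matD(1,2) carrier_matI index_mult_mat(2,3) index_one_mat(2,3))
  assume "psd n (M * A * transpose_mat M)"
  then have "psd n (N * (M * A * transpose_mat M) * transpose_mat N)"
    using N by (rule psd_congruence)
  also have "N * (M * A * transpose_mat M) * transpose_mat N
      = (N * M) * A * transpose_mat (N * M)"
    using M N A by (simp add: transpose_mult[of N n n M n] assoc_mult_mat[of _ n n _ n _ n])
  also have "\<dots> = A" using NM N A by simp
  finally show "psd n A" .
next
  assume "psd n A"
  then show "psd n (M * A * transpose_mat M)" using M by (rule psd_congruence)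
qed

lemma four_block_ldlt:
  fixes W C G :: "real mat"
  assumes W: "W \<in> carrier_mat d d" and Wsym: "transpose_mat W = W"
    and C: "C \<in> carrier_mat d m" and G: "G \<in> carrier_mat m m"
  defines "L \<equiv> four_block_mat (1\<^sub>m d) (0\<^sub>m d m) (transpose_mat C) (1\<^sub>m m)"
  shows "L * four_block_mat W (0\<^sub>m d m) (0\<^sub>m m d) G * transpose_mat L
    = four_block_mat W (W * C) (transpose_mat (W * C)) (transpose_mat C * (W * C) + G)"
proof -
  have Ct: "transpose_mat C \<in> carrier_mat m d" using C by simp
  have CtW: "transpose_mat C * W = transpose_mat (W * C)"
    using transpose_mult[OF W C] Wsym by simp
  have "transpose_mat L = four_block_mat (1\<^sub>m d) C (0\<^sub>m m d) (1\<^sub>m m)"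
    unfolding L_def using transpose_four_block_mat[OF one_carrier_mat zero_carrier_mat Ct one_carrier_mat]
    by simp
  moreover have "L * four_block_mat W (0\<^sub>m d m) (0\<^sub>m m d) G
      = four_block_mat W (0\<^sub>m d m) (transpose_mat (W * C)) G"
    unfolding L_def using W C Ct G CtW
    by (simp add: mult_four_block_mat[OF one_carrier_mat zero_carrier_mat Ct one_carrier_mat
          W zero_carrier_mat zero_carrier_mat G])
  moreover have "four_block_mat W (0\<^sub>m d m) (transpose_mat (W * C)) G
        * four_block_mat (1\<^sub>m d) C (0\<^sub>m m d) (1\<^sub>m m)
      = four_block_mat W (W * C) (transpose_mat (W * C)) (transpose_mat (W * C) * C + G)"
    using W C G by (simp add: mult_four_block_mat[OF W zero_carrier_mat _ G one_carrier_mat C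
          zero_carrier_mat one_carrier_mat])
  moreover have "transpose_mat (W * C) * C = transpose_mat C * (W * C)"
    using assoc_mult_mat[OF Ct W C] CtW by simp
  ultimately show ?thesis by simp
qed

lemma psd_four_block_shift_of_kernel_subset:
  fixes W Z R :: "real mat"
  assumes W: "psd d W" and Z: "Z \<in> carrier_mat d m" and R: "R \<in> carrier_mat m m"
    and sym: "transpose_mat R = R" and ker: "mat_kernel W \<subseteq> mat_kernel (transpose_mat Z)"
  shows "\<exists>\<alpha>. psd (d + m) (four_block_mat W Z (transpose_mat Z) (R + \<alpha> \<cdot>\<^sub>m 1\<^sub>m m))"
proof -
  have Wc: "W \<in> carrier_mat d d" and Wsym: "transpose_mat W = W"
    using W unfolding psd_def by auto
  obtain C where C: "C \<in> carrier_mat d m" and WC: "W * C = Z"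
    using psd_factor_of_kernel_subset[OF W Z ker] by blast
  have Ct: "transpose_mat C \<in> carrier_mat m d" using C by simp
  define G where "G = R - transpose_mat C * Z"
  have Gc: "G \<in> carrier_mat m m" unfolding G_def using Ct Z by (intro minus_carrier_mat) simp
  have "transpose_mat (transpose_mat C * Z) = transpose_mat C * Z"
    using transpose_mult[OF Ct Z] transpose_mult[OF Wc C] assoc_mult_mat[OF Ct Wc C] Wsym C
    by (simp flip: WC)
  then have "transpose_mat G = G"
    unfolding G_def using R Ct Z sym by (simp add: transpose_minus)
  then obtain \<alpha> where G\<alpha>: "psd m (G + \<alpha> \<cdot>\<^sub>m 1\<^sub>m m)"
    using psd_add_scalar_one_exists[OF Gc] by blast
  let ?L = "four_block_mat (1\<^sub>m d) (0\<^sub>m d m) (transpose_mat C) (1\<^sub>m m)"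
  have "transpose_mat C * Z + (G + \<alpha> \<cdot>\<^sub>m 1\<^sub>m m) = R + \<alpha> \<cdot>\<^sub>m 1\<^sub>m m"
    unfolding G_def using R Ct Z by (intro eq_matI) auto
  then have "?L * four_block_mat W (0\<^sub>m d m) (0\<^sub>m m d) (G + \<alpha> \<cdot>\<^sub>m 1\<^sub>m m) * transpose_mat ?L
      = four_block_mat W Z (transpose_mat Z) (R + \<alpha> \<cdot>\<^sub>m 1\<^sub>m m)"
    using four_block_ldlt[OF Wc Wsym C, of "G + \<alpha> \<cdot>\<^sub>m 1\<^sub>m m"] Gc WC by simp
  moreover have "psd (d + m) (?L * four_block_mat W (0\<^sub>m d m) (0\<^sub>m m d) (G + \<alpha> \<cdot>\<^sub>m 1\<^sub>m m) * transpose_mat ?L)"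
    using psd_four_block_diag[OF W G\<alpha>] by (rule psd_congruence) simp
  ultimately show ?thesis by metis
qed

lemma ex_psd_four_block_shift_iff:
  fixes W Z R :: "real mat"
  assumes W: "psd d W" and Z: "Z \<in> carrier_mat d m" and R: "R \<in> carrier_mat m m"
    and sym: "transpose_mat R = R"
  shows "(\<exists>\<alpha>. psd (d + m) (four_block_mat W Z (transpose_mat Z) (R + \<alpha> \<cdot>\<^sub>m 1\<^sub>m m)))
    \<longleftrightarrow> mat_kernel W \<subseteq> mat_kernel (transpose_mat Z)"
proof
  assume "\<exists>\<alpha>. psd (d + m) (four_block_mat W Z (transpose_mat Z) (R + \<alpha> \<cdot>\<^sub>m 1\<^sub>m m))"
  then obtain \<alpha> where "psd (d + m) (four_block_mat W Z (transpose_mat Z) (R + \<alpha> \<cdot>\<^sub>m 1\<^sub>m m))" ..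
  moreover have "W \<in> carrier_mat d d" using W unfolding psd_def by auto
  moreover have "R + \<alpha> \<cdot>\<^sub>m 1\<^sub>m m \<in> carrier_mat m m" using R by simp
  ultimately show "mat_kernel W \<subseteq> mat_kernel (transpose_mat Z)"
    using Z kernel_subset_of_psd_four_block by blast
qed (rule psd_four_block_shift_of_kernel_subset[OF W Z R sym])

lemma dim_cat_cols [simp]:
  "dim_row (cat_cols U V) = dim_row U" "dim_col (cat_cols U V) = dim_col U + dim_col V"
  unfolding cat_cols_def by auto

lemma index_cat_cols [simp]:
  "i < dim_row U \<Longrightarrow> j < dim_col U + dim_col V
    \<Longrightarrow> cat_cols U V $$ (i, j) = (if j < dim_col U then U $$ (i, j) else V $$ (i, j - dim_col U))"
  unfolding cat_cols_def by auto

lemma cat_cols_carrier_mat [simp]: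
  "U \<in> carrier_mat n d \<Longrightarrow> V \<in> carrier_mat n m \<Longrightarrow> cat_cols U V \<in> carrier_mat n (d + m)"
  unfolding cat_cols_def by auto

lemma row_cat_cols:
  assumes "U \<in> carrier_mat n d" "V \<in> carrier_mat n m" "i < n"
  shows "row (cat_cols U V) i = row U i @\<^sub>v row V i"
  using assms unfolding cat_cols_def by (intro eq_vecI) auto

lemma cat_cols_mult_four_block_mat:
  assumes U: "U \<in> carrier_mat n d" and V: "V \<in> carrier_mat n m"
    and A: "A \<in> carrier_mat d k" and B: "B \<in> carrier_mat d l"
    and C: "C \<in> carrier_mat m k" and D: "D \<in> carrier_mat m l"
  shows "cat_cols U V * four_block_mat A B C D = cat_cols (U * A + V * C) (U * B + V * D)"
proof (rule eq_matI)
  fix i j assume "i < dim_row (cat_cols (U * A + V * C) (U * B + V * D))"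
    "j < dim_col (cat_cols (U * A + V * C) (U * B + V * D))"
  then have i: "i < n" and j: "j < k + l" using U V A B C D by auto
  show "(cat_cols U V * four_block_mat A B C D) $$ (i, j)
      = cat_cols (U * A + V * C) (U * B + V * D) $$ (i, j)"
    using i j U V A B C D
    by (cases "j < k") (auto simp: row_cat_cols col_four_block_mat scalar_prod_append[of _ d _ m]
        carrier_vecI)
qed (use U V A B C D in auto)

lemma cat_cols_mult_transpose_cat_cols:
  assumes A: "A \<in> carrier_mat n d" and B: "B \<in> carrier_mat n m"
    and C: "C \<in> carrier_mat k d" and D: "D \<in> carrier_mat k m"
  shows "cat_cols A B * transpose_mat (cat_cols C D) = A * transpose_mat C + B * transpose_mat D"
  using assms
  by (intro eq_matI) (auto simp: row_cat_cols scalar_prod_append[of _ d _ m])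

lemma congruence_add_smult:
  fixes M A B :: "real mat"
  assumes M: "M \<in> carrier_mat k n" and A: "A \<in> carrier_mat n n" and B: "B \<in> carrier_mat n n"
  shows "M * (A + c \<cdot>\<^sub>m B) * transpose_mat M = M * A * transpose_mat M + c \<cdot>\<^sub>m (M * B * transpose_mat M)"
proof -
  have Mt: "transpose_mat M \<in> carrier_mat n k" using M by simp
  have "M * (A + c \<cdot>\<^sub>m B) = M * A + c \<cdot>\<^sub>m (M * B)"
    using M A B by (simp add: mult_add_distrib_mat[of _ k n] mult_smult_distrib)
  then show ?thesis
    using M A B Mt by (simp add: add_mult_distrib_mat[of _ k n] mult_smult_assoc_mat[of _ k n])
qed

lemma cat_cols_congruence_four_block_shift:
  fixes U V W Z R :: "real mat"
  assumes U: "U \<in> carrier_mat n d" and V: "V \<in> carrier_mat n m"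
    and W: "W \<in> carrier_mat d d" and Z: "Z \<in> carrier_mat d m" and R: "R \<in> carrier_mat m m"
  shows "cat_cols U V * four_block_mat W Z (transpose_mat Z) (R + \<alpha> \<cdot>\<^sub>m 1\<^sub>m m) * transpose_mat (cat_cols U V)
    = cat_cols U V * four_block_mat W Z (transpose_mat Z) R * transpose_mat (cat_cols U V)
      + \<alpha> \<cdot>\<^sub>m (V * transpose_mat V)"
proof -
  let ?M = "cat_cols U V" and ?E = "four_block_mat (0\<^sub>m d d) (0\<^sub>m d m) (0\<^sub>m m d) (1\<^sub>m m)"
  have "four_block_mat W Z (transpose_mat Z) (R + \<alpha> \<cdot>\<^sub>m 1\<^sub>m m)
      = four_block_mat W Z (transpose_mat Z) R + \<alpha> \<cdot>\<^sub>m ?E"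
    using W Z R by (intro eq_matI) auto
  moreover have "?M * ?E = cat_cols (0\<^sub>m n d) V"
    using U V by (simp add: cat_cols_mult_four_block_mat[OF U V zero_carrier_mat zero_carrier_mat
          zero_carrier_mat one_carrier_mat])
  then have "?M * ?E * transpose_mat ?M = V * transpose_mat V"
    using cat_cols_mult_transpose_cat_cols[OF zero_carrier_mat V U V] U V by simp
  ultimately show ?thesis
    using congruence_add_smult[of ?M n "d + m"] U V W Z R by simp
qed

lemma ex_psd_plus_smult_iff:
  fixes X S :: "real mat"
  assumes X: "X \<in> carrier_mat n n" and S: "S \<in> carrier_mat n n"
  shows "(\<exists>P \<alpha>. psd n P \<and> X = P + \<alpha> \<cdot>\<^sub>m S) \<longleftrightarrow> (\<exists>\<alpha>. psd n (X + \<alpha> \<cdot>\<^sub>m S))"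
proof
  assume "\<exists>P \<alpha>. psd n P \<and> X = P + \<alpha> \<cdot>\<^sub>m S"
  then obtain P \<alpha> where P: "psd n P" and "X = P + \<alpha> \<cdot>\<^sub>m S" by blast
  moreover have "P + \<alpha> \<cdot>\<^sub>m S + (- \<alpha>) \<cdot>\<^sub>m S = P"
    using P S unfolding psd_def by (intro eq_matI) auto
  ultimately show "\<exists>\<alpha>. psd n (X + \<alpha> \<cdot>\<^sub>m S)" by metis
next
  assume "\<exists>\<alpha>. psd n (X + \<alpha> \<cdot>\<^sub>m S)"
  then obtain \<alpha> where "psd n (X + \<alpha> \<cdot>\<^sub>m S)" ..
  moreover have "X = X + \<alpha> \<cdot>\<^sub>m S + (- \<alpha>) \<cdot>\<^sub>m S"
    using X S by (intro eq_matI) auto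
  ultimately show "\<exists>P \<alpha>. psd n P \<and> X = P + \<alpha> \<cdot>\<^sub>m S" by blast
qed

(* Neither the description of the face S^perp \<inter> S^n_+ nor the symmetry of S is used. *)
theorem lemma9:
  fixes n d :: nat and S U V W Z R :: "real mat"
  assumes "d \<le> n"
    and "S \<in> carrier_mat n n" and "transpose_mat S = S"
    and "U \<in> carrier_mat n d" and "V \<in> carrier_mat n (n - d)"
    and "invertible_mat (cat_cols U V)"
    and "S = V * transpose_mat V"
    and "{X. psd n X \<and> mtrace (S * X) = 0} = {U * W' * transpose_mat U | W'. psd d W'}"
    and "psd d W"
    and "R \<in> carrier_mat (n - d) (n - d)" and "transpose_mat R = R"
    and "Z \<in> carrier_mat d (n - d)"
  shows "(\<exists>P \<alpha>. psd n P \<and>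
            cat_cols U V * four_block_mat W Z (transpose_mat Z) R * transpose_mat (cat_cols U V)
              = P + \<alpha> \<cdot>\<^sub>m S)
         \<longleftrightarrow> mat_kernel W \<subseteq> mat_kernel (transpose_mat Z)"
proof -
  define m where "m = n - d"
  have n: "n = d + m" using \<open>d \<le> n\<close> unfolding m_def by simp
  have U: "U \<in> carrier_mat n d" and V: "V \<in> carrier_mat n m" and Z: "Z \<in> carrier_mat d m"
    and R: "R \<in> carrier_mat m m" and W: "W \<in> carrier_mat d d"
    using assms unfolding m_def psd_def by auto
  define M where "M = cat_cols U V"
  have M: "M \<in> carrier_mat n n" unfolding M_def using U V n by simp
  let ?B = "\<lambda>\<alpha>. four_block_mat W Z (transpose_mat Z) (R + \<alpha> \<cdot>\<^sub>m 1\<^sub>m m)"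
  let ?X = "M * four_block_mat W Z (transpose_mat Z) R * transpose_mat M"
  have "psd n (?X + \<alpha> \<cdot>\<^sub>m S) \<longleftrightarrow> psd (d + m) (?B \<alpha>)" for \<alpha>
    using psd_congruence_iff[OF M \<open>invertible_mat (cat_cols U V)\<close>[folded M_def], of "?B \<alpha>"]
      cat_cols_congruence_four_block_shift[OF U V W Z R] W R n
    unfolding M_def \<open>S = V * transpose_mat V\<close> by simp
  moreover have "?X \<in> carrier_mat n n"
    using M W R n by (intro mult_carrier_mat[of _ n n]) auto
  ultimately have "(\<exists>P \<alpha>. psd n P \<and> ?X = P + \<alpha> \<cdot>\<^sub>m S) \<longleftrightarrow> (\<exists>\<alpha>. psd (d + m) (?B \<alpha>))"
    using ex_psd_plus_smult_iff[of ?X n S] \<open>S \<in> carrier_mat n n\<close> n by simp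
  also have "\<dots> \<longleftrightarrow> mat_kernel W \<subseteq> mat_kernel (transpose_mat Z)"
    by (rule ex_psd_four_block_shift_iff[OF \<open>psd d W\<close> Z R \<open>transpose_mat R = R\<close>])
  finally show ?thesis unfolding M_def m_def .
qed

end
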